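(* Let $\tilde L$ be a minimum-size counterexample. For any two meet-irreducible elements $m_1,m_2$ of $\tilde L$, there exists a join-irreducible element $j$ of $\tilde L$ with $j\le m_1$ and $j\le m_2$.
   Context: For a poset $P$, $x$ upper covers $y$ (and $y$ lower covers $x$) if $y<x$ with nothing strictly between. Join-irreducible: upper covers exactly one element; meet-irreducible: lower covers exactly one element. For $x\in P$, ${\uparrow}x=\{y: x\le y\}$. A counterexample is a finite lattice $L$ with $|L|>1$ in which every join-irreducible $j$ satisfies $|{\uparrow}j|>|L|/2$; a minimum-size counterexample is a counterexample $\tilde L$ such that no counterexample has fewer elements. *)

theory Defs
  imports Main
begin

definition is_partial_order :: "'a set \<Rightarrow> ('a \<Rightarrow> 'a \<Rightarrow> bool) \<Rightarrow> bool" where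
  "is_partial_order A le \<longleftrightarrow>
     (\<forall>x\<in>A. le x x) \<and>
     (\<forall>x\<in>A. \<forall>y\<in>A. le x y \<and> le y x \<longrightarrow> x = y) \<and>
     (\<forall>x\<in>A. \<forall>y\<in>A. \<forall>z\<in>A. le x y \<and> le y z \<longrightarrow> le x z)"

definition is_lattice :: "'a set \<Rightarrow> ('a \<Rightarrow> 'a \<Rightarrow> bool) \<Rightarrow> bool" where
  "is_lattice A le \<longleftrightarrow> is_partial_order A le \<and>
     (\<forall>x\<in>A. \<forall>y\<in>A. \<exists>s\<in>A. le x s \<and> le y s \<and> (\<forall>u\<in>A. le x u \<and> le y u \<longrightarrow> le s u)) \<and>
     (\<forall>x\<in>A. \<forall>y\<in>A. \<exists>i\<in>A. le i x \<and> le i y \<and> (\<forall>u\<in>A. le u x \<and> le u y \<longrightarrow> le u i))"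

definition finite_lattice :: "'a set \<Rightarrow> ('a \<Rightarrow> 'a \<Rightarrow> bool) \<Rightarrow> bool" where
  "finite_lattice A le \<longleftrightarrow> finite A \<and> is_lattice A le"

definition covers :: "'a set \<Rightarrow> ('a \<Rightarrow> 'a \<Rightarrow> bool) \<Rightarrow> 'a \<Rightarrow> 'a \<Rightarrow> bool" where
  "covers A le x y \<longleftrightarrow> x \<in> A \<and> y \<in> A \<and> le y x \<and> y \<noteq> x \<and>
     \<not> (\<exists>z\<in>A. le y z \<and> y \<noteq> z \<and> le z x \<and> z \<noteq> x)"

definition join_irreducible :: "'a set \<Rightarrow> ('a \<Rightarrow> 'a \<Rightarrow> bool) \<Rightarrow> 'a \<Rightarrow> bool" where
  "join_irreducible A le j \<longleftrightarrow> j \<in> A \<and> (\<exists>!y. covers A le j y)"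

definition meet_irreducible :: "'a set \<Rightarrow> ('a \<Rightarrow> 'a \<Rightarrow> bool) \<Rightarrow> 'a \<Rightarrow> bool" where
  "meet_irreducible A le m \<longleftrightarrow> m \<in> A \<and> (\<exists>!y. covers A le y m)"

definition up_set :: "'a set \<Rightarrow> ('a \<Rightarrow> 'a \<Rightarrow> bool) \<Rightarrow> 'a \<Rightarrow> 'a set" where
  "up_set A le x = {y\<in>A. le x y}"

text \<open>Counterexample (to the union-closed sets / Frankl conjecture in lattice form).\<close>
definition counterexample :: "'a set \<Rightarrow> ('a \<Rightarrow> 'a \<Rightarrow> bool) \<Rightarrow> bool" where
  "counterexample A le \<longleftrightarrow> finite_lattice A le \<and> card A > 1 \<and>
     (\<forall>j. join_irreducible A le j \<longrightarrow> 2 * card (up_set A le j) > card A)"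

text \<open>Minimum-size counterexample. Every finite lattice is isomorphic to one whose
carrier is a subset of nat, so it suffices to compare against counterexamples
on nat carriers.\<close>
definition min_counterexample :: "'a set \<Rightarrow> ('a \<Rightarrow> 'a \<Rightarrow> bool) \<Rightarrow> bool" where
  "min_counterexample A le \<longleftrightarrow> counterexample A le \<and>
     (\<forall>(B::nat set) leB. counterexample B leB \<longrightarrow> card A \<le> card B)"

end

theory Submission
  imports Defs
begin

text \<open>If m1 and m2 are comparable, any join-irreducible below the smaller one will do; one
  exists because the bottom of a minimum counterexample is not meet-irreducible (otherwise
  deleting it would leave a smaller counterexample). If m1 and m2 are incomparable and have no
  common join-irreducible below them, delete both. Meets survive, since a meet-irreducible is
  never the meet of two other elements, so a lattice remains. Each of its join-irreducibles x
  either is join-irreducible in the original lattice or is the upper cover of some m_i, which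
  is then itself join-irreducible with up-set one larger than that of x; in both cases the
  up-set of x has lost at most one element of the two deleted ones. So the smaller lattice is
  still a counterexample, contradicting minimality.\<close>

lemma partial_order_dual:
  "is_partial_order A le \<Longrightarrow> is_partial_order A (\<lambda>x y. le y x)"
  unfolding is_partial_order_def by blast

lemma finite_lattice_dual:
  "finite_lattice A le \<Longrightarrow> finite_lattice A (\<lambda>x y. le y x)"
  unfolding finite_lattice_def is_lattice_def by (blast intro: partial_order_dual)

lemma covers_dual: "covers A (\<lambda>x y. le y x) x y \<longleftrightarrow> covers A le y x"
  unfolding covers_def by blast

lemma partial_orderD:
  assumes "is_partial_order A le"
  shows partial_order_refl: "x \<in> A \<Longrightarrow> le x x"
    and partial_order_antisym: "\<lbrakk>x \<in> A; y \<in> A; le x y; le y x\<rbrakk> \<Longrightarrow> x = y"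
    and partial_order_trans: "\<lbrakk>x \<in> A; y \<in> A; z \<in> A; le x y; le y z\<rbrakk> \<Longrightarrow> le x z"
  using assms unfolding is_partial_order_def by blast+

lemma finite_latticeD:
  assumes "finite_lattice A le"
  shows finite_lattice_finite: "finite A"
    and finite_lattice_partial_order: "is_partial_order A le"
    and finite_lattice_join: "\<lbrakk>x \<in> A; y \<in> A\<rbrakk> \<Longrightarrow>
           \<exists>s\<in>A. le x s \<and> le y s \<and> (\<forall>u\<in>A. le x u \<and> le y u \<longrightarrow> le s u)"
    and finite_lattice_meet: "\<lbrakk>x \<in> A; y \<in> A\<rbrakk> \<Longrightarrow>
           \<exists>i\<in>A. le i x \<and> le i y \<and> (\<forall>u\<in>A. le u x \<and> le u y \<longrightarrow> le u i)"
  using assms unfolding finite_lattice_def is_lattice_def by auto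

lemma partial_order_subset:
  "is_partial_order A le \<Longrightarrow> S \<subseteq> A \<Longrightarrow> is_partial_order S le"
  unfolding is_partial_order_def by blast

lemma partial_order_finite_maximal:
  assumes po: "is_partial_order A le" and "finite X" "X \<noteq> {}" "X \<subseteq> A"
  obtains x where "x \<in> X" "\<And>y. y \<in> X \<Longrightarrow> le x y \<Longrightarrow> y = x"
proof -
  have "\<exists>x\<in>X. \<forall>y\<in>X. le x y \<longrightarrow> y = x"
    using assms(2-4)
  proof (induction X rule: finite_ne_induct)
    case (insert a X)
    then obtain m where m: "m \<in> X" "\<forall>y\<in>X. le m y \<longrightarrow> y = m" by auto
    show ?case
    proof (cases "le m a")
      case True
      have "y = a" if "y \<in> X" "le a y" for y
        using that m True insert.prems partial_order_trans[OF po, of m a y]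
          partial_order_antisym[OF po, of a m] by auto
      then show ?thesis by blast
    next
      case False
      then show ?thesis using m by auto
    qed
  qed auto
  then show thesis using that by blast
qed

lemma partial_order_finite_minimal:
  assumes "is_partial_order A le" and "finite X" "X \<noteq> {}" "X \<subseteq> A"
  obtains x where "x \<in> X" "\<And>y. y \<in> X \<Longrightarrow> le y x \<Longrightarrow> y = x"
  using partial_order_finite_maximal[of A "\<lambda>x y. le y x"] partial_order_dual assms by blast

lemma exists_lower_cover_above:
  assumes po: "is_partial_order A le" and "finite A"
    and "x \<in> A" "y \<in> A" "le y x" "y \<noteq> x"
  obtains z where "covers A le x z" "le y z"
proof -
  define X where "X = {z\<in>A. le y z \<and> le z x \<and> z \<noteq> x}"
  have "y \<in> X" "finite X" "X \<subseteq> A"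
    using assms partial_order_refl[OF po] unfolding X_def by auto
  then obtain z where z: "z \<in> X" and max: "\<And>w. w \<in> X \<Longrightarrow> le z w \<Longrightarrow> w = z"
    using partial_order_finite_maximal[OF po, of X] by blast
  have "\<not> (\<exists>w\<in>A. le z w \<and> z \<noteq> w \<and> le w x \<and> w \<noteq> x)"
  proof
    assume "\<exists>w\<in>A. le z w \<and> z \<noteq> w \<and> le w x \<and> w \<noteq> x"
    then obtain w where w: "w \<in> A" "le z w" "z \<noteq> w" "le w x" "w \<noteq> x" by blast
    have "le y w" using z w assms(4) partial_order_trans[OF po, of y z w] unfolding X_def by blast
    then have "w \<in> X" using w unfolding X_def by blast
    then show False using max w by blast
  qed
  then have "covers A le x z" using z assms(3) unfolding covers_def X_def by blast
  then show thesis using z that unfolding X_def by blast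
qed

lemma exists_upper_cover_below:
  assumes "is_partial_order A le" and "finite A"
    and "x \<in> A" "y \<in> A" "le y x" "y \<noteq> x"
  obtains z where "covers A le z y" "le z x"
proof -
  obtain z where "covers A (\<lambda>x y. le y x) y z" "le z x"
    using exists_lower_cover_above[OF partial_order_dual[OF assms(1)] assms(2,4,3,5)
        assms(6)[symmetric]] .
  then show thesis using that covers_dual[THEN iffD1] by metis
qed

lemma finite_lattice_bottom:
  assumes fl: "finite_lattice A le" and "A \<noteq> {}"
  obtains b where "b \<in> A" "\<And>x. x \<in> A \<Longrightarrow> le b x"
proof -
  obtain b where b: "b \<in> A" and min: "\<And>y. y \<in> A \<Longrightarrow> le y b \<Longrightarrow> y = b"
    using partial_order_finite_minimal[OF finite_lattice_partial_order[OF fl]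
        finite_lattice_finite[OF fl] assms(2)] by blast
  have "le b x" if x: "x \<in> A" for x
  proof -
    obtain i where "i \<in> A" "le i b" "le i x" using finite_lattice_meet[OF fl b x] by blast
    then show ?thesis using min by blast
  qed
  with b show thesis by (rule that)
qed

lemma finite_lattice_top:
  assumes "finite_lattice A le" and "A \<noteq> {}"
  obtains t where "t \<in> A" "\<And>x. x \<in> A \<Longrightarrow> le x t"
  using finite_lattice_bottom[OF finite_lattice_dual[OF assms(1)] assms(2)] by metis

lemma top_not_meet_irreducible:
  assumes "is_partial_order A le" and "\<And>x. x \<in> A \<Longrightarrow> le x t"
  shows "\<not> meet_irreducible A le t"
  using assms partial_order_antisym[OF assms(1)] unfolding meet_irreducible_def covers_def by metis

lemma meet_irreducible_cover_le:
  assumes po: "is_partial_order A le" and fin: "finite A"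
    and mi: "meet_irreducible A le m" and c: "covers A le c m"
    and "y \<in> A" "le m y" "m \<noteq> y"
  shows "le c y"
proof -
  have "m \<in> A" using mi unfolding meet_irreducible_def by blast
  then obtain z where "covers A le z m" "le z y"
    using exists_upper_cover_below[OF po fin assms(5) _ assms(6,7)] by blast
  moreover have "z = c" using mi c \<open>covers A le z m\<close> unfolding meet_irreducible_def by blast
  ultimately show ?thesis by simp
qed

lemma meet_irreducible_glb_eq:
  assumes po: "is_partial_order A le" and fin: "finite A"
    and mi: "meet_irreducible A le m" and "x \<in> A" "y \<in> A" "le m x" "le m y"
    and glb: "\<forall>u\<in>A. le u x \<and> le u y \<longrightarrow> le u m"
  shows "m = x \<or> m = y"
proof (rule ccontr)
  assume "\<not> (m = x \<or> m = y)"
  obtain c where c: "covers A le c m" using mi unfolding meet_irreducible_def by blast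
  then have "le c x" "le c y"
    using meet_irreducible_cover_le[OF po fin mi c] assms(4-7) \<open>\<not> (m = x \<or> m = y)\<close> by auto
  then have "le c m" using glb c unfolding covers_def by blast
  then show False using c partial_order_antisym[OF po] unfolding covers_def by blast
qed

lemma finite_lattice_meet_closed_subset:
  assumes fl: "finite_lattice A le" and SA: "S \<subseteq> A"
    and t: "t \<in> S" "\<And>x. x \<in> A \<Longrightarrow> le x t"
    and closed: "\<And>x y i. \<lbrakk>x \<in> S; y \<in> S; i \<in> A; le i x; le i y;
                          \<forall>u\<in>A. le u x \<and> le u y \<longrightarrow> le u i\<rbrakk> \<Longrightarrow> i \<in> S"
  shows "finite_lattice S le"
proof -
  have poS: "is_partial_order S le"
    using partial_order_subset[OF finite_lattice_partial_order[OF fl] SA] .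
  have finS: "finite S" using finite_lattice_finite[OF fl] SA finite_subset by blast
  have meet: "\<exists>i\<in>S. le i x \<and> le i y \<and> (\<forall>u\<in>S. le u x \<and> le u y \<longrightarrow> le u i)"
    if xy: "x \<in> S" "y \<in> S" for x y
  proof -
    obtain i where "i \<in> A" "le i x" "le i y" "\<forall>u\<in>A. le u x \<and> le u y \<longrightarrow> le u i"
      using finite_lattice_meet[OF fl] xy SA by blast
    with closed[OF xy] SA show ?thesis by blast
  qed
  txt \<open>A minimal common upper bound is least: its meet with any other one is again one.\<close>
  have join: "\<exists>s\<in>S. le x s \<and> le y s \<and> (\<forall>u\<in>S. le x u \<and> le y u \<longrightarrow> le s u)"
    if xy: "x \<in> S" "y \<in> S" for x y
  proof -
    define U where "U = {u\<in>S. le x u \<and> le y u}"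
    have "U \<noteq> {}" "U \<subseteq> S" "finite U" using t xy SA finS unfolding U_def by auto
    then obtain s where s: "s \<in> U" and min: "\<And>w. w \<in> U \<Longrightarrow> le w s \<Longrightarrow> w = s"
      using partial_order_finite_minimal[OF poS] by blast
    have "le s u" if u: "u \<in> S" "le x u" "le y u" for u
    proof -
      obtain i where i: "i \<in> S" "le i s" "le i u" "\<forall>v\<in>S. le v s \<and> le v u \<longrightarrow> le v i"
        using meet s u unfolding U_def by blast
      then have "i \<in> U" using s u xy unfolding U_def by blast
      then show ?thesis using min i by blast
    qed
    then show ?thesis using s unfolding U_def by blast
  qed
  show ?thesis unfolding finite_lattice_def is_lattice_def using finS poS meet join by blast
qed

lemma join_irreducible_atom:
  assumes "covers A le a b" and "b \<in> A" "\<And>x. x \<in> A \<Longrightarrow> le b x"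
  shows "join_irreducible A le a"
proof -
  have "y = b" if y: "covers A le a y" for y
  proof (rule ccontr)
    assume "y \<noteq> b"
    have "y \<in> A" "le y a" "y \<noteq> a" using y unfolding covers_def by blast+
    with assms \<open>y \<noteq> b\<close> show False unfolding covers_def by blast
  qed
  moreover have "a \<in> A" using assms(1) unfolding covers_def by blast
  ultimately show ?thesis using assms(1) unfolding join_irreducible_def by blast
qed

lemma exists_join_irreducible_le:
  assumes fl: "finite_lattice A le" and b: "b \<in> A" "\<And>x. x \<in> A \<Longrightarrow> le b x"
    and "x \<in> A" "x \<noteq> b"
  obtains j where "join_irreducible A le j" "le j x"
proof -
  obtain a where "covers A le a b" "le a x"
    using exists_upper_cover_below[OF finite_lattice_partial_order[OF fl]
        finite_lattice_finite[OF fl] assms(4) b(1) b(2)[OF assms(4)] assms(5)[symmetric]] .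
  then show thesis using join_irreducible_atom[of A le a b] b that by blast
qed

section \<open>Deleting meet-irreducible elements\<close>

lemma finite_lattice_Diff_meet_irreducibles:
  assumes fl: "finite_lattice L le" and R: "\<And>m. m \<in> R \<Longrightarrow> meet_irreducible L le m"
  shows "finite_lattice (L - R) le"
proof (cases "L = {}")
  case True
  then show ?thesis using fl by simp
next
  case False
  note po = finite_lattice_partial_order[OF fl] and fin = finite_lattice_finite[OF fl]
  obtain t where t: "t \<in> L" "\<And>x. x \<in> L \<Longrightarrow> le x t" using finite_lattice_top[OF fl False] by blast
  then have "t \<in> L - R" using R top_not_meet_irreducible[OF po] by blast
  show ?thesis
  proof (rule finite_lattice_meet_closed_subset[OF fl Diff_subset \<open>t \<in> L - R\<close> t(2)])
    fix x y i assume "x \<in> L - R" "y \<in> L - R" "i \<in> L" "le i x" "le i y"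
      "\<forall>u\<in>L. le u x \<and> le u y \<longrightarrow> le u i"
    then show "i \<in> L - R" using meet_irreducible_glb_eq[OF po fin R] by blast
  qed
qed

lemma join_irreducible_Diff_meet_irreducibles:
  assumes po: "is_partial_order L le" and fin: "finite L"
    and R: "\<And>m. m \<in> R \<Longrightarrow> meet_irreducible L le m"
    and R_covers: "\<And>m c. m \<in> R \<Longrightarrow> covers L le c m \<Longrightarrow> c \<notin> R"
    and x: "x \<in> L - R" and x_covers: "\<And>m. m \<in> R \<Longrightarrow> \<not> covers L le x m"
    and ji: "join_irreducible (L - R) le x"
  shows "join_irreducible L le x"
proof -
  obtain d where d: "covers (L - R) le x d"
    and uniq: "\<And>y. covers (L - R) le x y \<Longrightarrow> y = d"
    using ji unfolding join_irreducible_def by blast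
  have dL: "d \<in> L - R" "le d x" "d \<noteq> x" using d unfolding covers_def by blast+
  txt \<open>An element z of R strictly between d and x would have its upper cover in L - R
    strictly between d and x as well.\<close>
  have no_between: False
    if z: "z \<in> L" "le d z" "d \<noteq> z" "le z x" "z \<noteq> x" for z
  proof (cases "z \<in> R")
    case False
    then show False using d z unfolding covers_def by blast
  next
    case True
    obtain c where c: "covers L le c z" using R[OF True] unfolding meet_irreducible_def by blast
    have cx: "le c x" using meet_irreducible_cover_le[OF po fin R[OF True] c] x z(4,5) by blast
    have cR: "c \<in> L - R" using c R_covers[OF True c] unfolding covers_def by blast
    have "c \<noteq> x" using x_covers[OF True] c by blast
    moreover have "le d c" "d \<noteq> c"
      using partial_order_trans[OF po, of d z c] partial_order_antisym[OF po, of c z] z dL c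
      unfolding covers_def by auto
    ultimately show False using d cR cx unfolding covers_def by blast
  qed
  have "covers L le x d" using x dL no_between unfolding covers_def by blast
  moreover have "y = d" if y: "covers L le x y" for y
  proof -
    have "y \<notin> R" using y x_covers by blast
    then have "covers (L - R) le x y" using y x unfolding covers_def by blast
    then show ?thesis by (rule uniq)
  qed
  ultimately show ?thesis using x unfolding join_irreducible_def by blast
qed

lemma card_up_set_meet_irreducible:
  assumes po: "is_partial_order A le" and fin: "finite A"
    and mi: "meet_irreducible A le m" and c: "covers A le c m"
  shows "card (up_set A le m) = Suc (card (up_set A le c))"
proof -
  have m: "m \<in> A" and cm: "c \<in> A" "le m c" "m \<noteq> c" using mi c
    unfolding meet_irreducible_def covers_def by blast+
  have "up_set A le m = insert m (up_set A le c)"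
  proof (rule set_eqI)
    fix y
    show "y \<in> up_set A le m \<longleftrightarrow> y \<in> insert m (up_set A le c)"
      using meet_irreducible_cover_le[OF po fin mi c, of y] partial_order_refl[OF po m]
        partial_order_trans[OF po m cm(1), of y] cm m
      unfolding up_set_def by auto
  qed
  moreover have "m \<notin> up_set A le c"
    using partial_order_antisym[OF po m cm(1) cm(2)] cm(3) unfolding up_set_def by blast
  moreover have "finite (up_set A le c)" using fin unfolding up_set_def by simp
  ultimately show ?thesis by simp
qed

text \<open>If the upper cover c of m stays join-irreducible after removing m, then m has only one
  lower cover: below c, all lower covers of m lie under the unique lower cover d of c, so
  their join m would lie strictly between d and c.\<close>
lemma join_irreducible_of_join_irreducible_cover:
  assumes fl: "finite_lattice L le" and S: "S \<subseteq> L" "m \<in> L" "m \<notin> S"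
    and c: "covers L le c m" "c \<in> S" and ji: "join_irreducible S le c"
    and lower: "\<And>y. covers L le m y \<Longrightarrow> y \<in> S"
    and y0: "covers L le m y0"
  shows "join_irreducible L le m"
proof -
  note po = finite_lattice_partial_order[OF fl] and fin = finite_lattice_finite[OF fl]
  have poS: "is_partial_order S le" using partial_order_subset[OF po S(1)] .
  have finS: "finite S" using fin S(1) finite_subset by blast
  obtain d where d: "covers S le c d" and uniq: "\<And>y. covers S le c y \<Longrightarrow> y = d"
    using ji unfolding join_irreducible_def by blast
  have dS: "d \<in> S" "le d c" "d \<noteq> c" using d unfolding covers_def by blast+
  have below_d: "le y d" if y: "covers L le m y" for y
  proof -
    have "y \<in> S" "le y m" "y \<noteq> m" using y lower unfolding covers_def by blast+
    have "le y c" using partial_order_trans[OF po, of y m c] \<open>le y m\<close> y c(1) unfolding covers_def by blast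
    moreover have "y \<noteq> c"
      using partial_order_antisym[OF po, of y m] \<open>le y m\<close> \<open>y \<noteq> m\<close> y c(1) unfolding covers_def by blast
    ultimately obtain z where "covers S le c z" "le y z"
      using exists_lower_cover_above[OF poS finS c(2) \<open>y \<in> S\<close>] by blast
    then show ?thesis using uniq by blast
  qed
  have "y = y0" if y: "covers L le m y" for y
  proof (rule ccontr)
    assume "y \<noteq> y0"
    have yL: "y \<in> L" "le y m" and y0L: "y0 \<in> L" "le y0 m" using y y0 unfolding covers_def by blast+
    obtain s where s: "s \<in> L" "le y s" "le y0 s" "\<forall>u\<in>L. le y u \<and> le y0 u \<longrightarrow> le s u"
      using finite_lattice_join[OF fl yL(1) y0L(1)] by blast
    have "le s m" using s yL y0L S(2) by blast
    then have "s = m" using s y y0 \<open>y \<noteq> y0\<close> unfolding covers_def by blast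
    then have "le m d" using s below_d[OF y] below_d[OF y0] dS S(1) by blast
    then show False using c(1) dS S unfolding covers_def by blast
  qed
  with y0 S(2) show ?thesis unfolding join_irreducible_def by blast
qed

section \<open>Minimum counterexamples\<close>

lemma counterexampleD:
  assumes "counterexample L le"
  shows counterexample_finite_lattice: "finite_lattice L le"
    and counterexample_card: "1 < card L"
    and counterexample_up_set: "join_irreducible L le j \<Longrightarrow> card L < 2 * card (up_set L le j)"
  using assms unfolding counterexample_def by blast+

text \<open>Since \<open>min_counterexample\<close> only compares with counterexamples carried by sets of
  naturals, counterexamples are transported along bijections.\<close>

context
  fixes g :: "'b \<Rightarrow> 'a" and B :: "'b set" and A :: "'a set"
  assumes bij: "bij_betw g B A"
begin

lemma pullback_partial_order:
  assumes "is_partial_order A le"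
  shows "is_partial_order B (\<lambda>x y. le (g x) (g y))"
  using assms bij unfolding is_partial_order_def bij_betw_def ball_simps(9)
  by (blast dest: inj_onD)

lemma pullback_lattice:
  assumes "is_lattice A le"
  shows "is_lattice B (\<lambda>x y. le (g x) (g y))"
proof -
  have A: "A = g ` B" using bij by (simp add: bij_betw_def)
  from assms have po: "is_partial_order A le"
    and J: "\<forall>x\<in>A. \<forall>y\<in>A. \<exists>s\<in>A. le x s \<and> le y s \<and> (\<forall>u\<in>A. le x u \<and> le y u \<longrightarrow> le s u)"
    and M: "\<forall>x\<in>A. \<forall>y\<in>A. \<exists>i\<in>A. le i x \<and> le i y \<and> (\<forall>u\<in>A. le u x \<and> le u y \<longrightarrow> le u i)"
    unfolding is_lattice_def by blast+
  show ?thesis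
    using pullback_partial_order[OF po] J M unfolding is_lattice_def A ball_simps(9) bex_simps(7)
    by blast
qed

lemma pullback_covers:
  "x \<in> B \<Longrightarrow> y \<in> B \<Longrightarrow> covers B (\<lambda>x y. le (g x) (g y)) x y \<longleftrightarrow> covers A le (g x) (g y)"
  using bij unfolding covers_def bij_betw_def bex_simps(7) inj_on_def by blast

lemma pullback_join_irreducible:
  assumes ji: "join_irreducible B (\<lambda>x y. le (g x) (g y)) x"
  shows "join_irreducible A le (g x)"
proof -
  obtain y where y: "covers B (\<lambda>x y. le (g x) (g y)) x y"
    and uniq: "\<And>z. covers B (\<lambda>x y. le (g x) (g y)) x z \<Longrightarrow> z = y"
    using ji unfolding join_irreducible_def by blast
  have x: "x \<in> B" and "y \<in> B" using y unfolding covers_def by blast+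
  have "covers A le (g x) (g y)" using y x \<open>y \<in> B\<close> pullback_covers by blast
  moreover have "a = g y" if a: "covers A le (g x) a" for a
  proof -
    obtain z where "z \<in> B" "a = g z"
      using a bij unfolding covers_def bij_betw_def by blast
    then show "a = g y" using a x uniq pullback_covers by blast
  qed
  ultimately show ?thesis using x bij unfolding join_irreducible_def bij_betw_def by blast
qed

lemma pullback_card_up_set:
  assumes "x \<in> B"
  shows "card (up_set B (\<lambda>x y. le (g x) (g y)) x) = card (up_set A le (g x))"
proof -
  have "up_set A le (g x) = g ` up_set B (\<lambda>x y. le (g x) (g y)) x"
    using assms bij unfolding up_set_def bij_betw_def by blast
  moreover have "inj_on g (up_set B (\<lambda>x y. le (g x) (g y)) x)"
    using bij unfolding bij_betw_def up_set_def by (auto intro: inj_on_subset)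
  ultimately show ?thesis by (simp add: card_image)
qed

lemma pullback_counterexample:
  assumes "counterexample A le"
  shows "counterexample B (\<lambda>x y. le (g x) (g y))"
proof -
  have "finite A" "is_lattice A le" "card A > 1"
    and big: "\<And>j. join_irreducible A le j \<Longrightarrow> card A < 2 * card (up_set A le j)"
    using assms unfolding counterexample_def finite_lattice_def by auto
  moreover have "card B = card A" using bij by (rule bij_betw_same_card)
  moreover have "finite B" using bij \<open>finite A\<close> bij_betw_finite by blast
  moreover have "card B < 2 * card (up_set B (\<lambda>x y. le (g x) (g y)) x)"
    if "join_irreducible B (\<lambda>x y. le (g x) (g y)) x" for x
  proof -
    have "x \<in> B" using that unfolding join_irreducible_def by blast
    then show ?thesis
      using big[OF pullback_join_irreducible[OF that]] pullback_card_up_set \<open>card B = card A\<close>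
      by simp
  qed
  ultimately show ?thesis
    unfolding counterexample_def finite_lattice_def using pullback_lattice by auto
qed

end

lemma min_counterexample_card_le:
  assumes "min_counterexample L le" and "counterexample A le'"
  shows "card L \<le> card A"
proof -
  obtain g where "bij_betw g {0..<card A} A"
    using assms(2) ex_bij_betw_nat_finite unfolding counterexample_def finite_lattice_def by blast
  then have "counterexample {0..<card A} (\<lambda>x y. le' (g x) (g y))"
    using assms(2) by (rule pullback_counterexample)
  then show ?thesis using assms(1) unfolding min_counterexample_def by fastforce
qed

lemma min_counterexample_bottom_not_meet_irreducible:
  assumes min: "min_counterexample L le" and b: "b \<in> L" "\<And>x. x \<in> L \<Longrightarrow> le b x"
  shows "\<not> meet_irreducible L le b"
proof
  assume mi: "meet_irreducible L le b"
  have ce: "counterexample L le" using min unfolding min_counterexample_def by blast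
  note fl = counterexample_finite_lattice[OF ce]
  note po = finite_lattice_partial_order[OF fl] and fin = finite_lattice_finite[OF fl]
  obtain a where a: "covers L le a b" using mi unfolding meet_irreducible_def by blast
  have aL: "a \<in> L" "a \<noteq> b" using a unfolding covers_def by blast+
  have above_a: "le a y" if "y \<in> L" "y \<noteq> b" for y
    using meet_irreducible_cover_le[OF po fin mi a] b that by blast
  define S where "S = L - {b}"
  have card_S: "card S = card L - 1" using b fin unfolding S_def by simp
  have "up_set L le a = S"
    using above_a aL b partial_order_antisym[OF po] unfolding up_set_def S_def by blast
  then have card_L: "card L < 2 * card S"
    using counterexample_up_set[OF ce join_irreducible_atom[OF a b]] by simp
  have "card S < 2 * card (up_set S le x)" if ji: "join_irreducible S le x" for x
  proof -
    have x: "x \<in> L - {b}" using ji unfolding join_irreducible_def S_def by blast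
    txt \<open>a is the least element of S, so it has no lower cover there.\<close>
    have "x \<noteq> a"
    proof
      assume "x = a"
      then obtain d where "covers S le a d" using ji unfolding join_irreducible_def by blast
      then show False
        using above_a partial_order_antisym[OF po] unfolding covers_def S_def by blast
    qed
    then have "\<not> covers L le x b" using mi a unfolding meet_irreducible_def by blast
    then have "join_irreducible L le x"
      using join_irreducible_Diff_meet_irreducibles[OF po fin, of "{b}"] mi x ji
      unfolding S_def covers_def by blast
    moreover have "up_set S le x = up_set L le x"
      using x b partial_order_antisym[OF po] unfolding up_set_def S_def by blast
    ultimately show ?thesis using counterexample_up_set[OF ce] card_S by fastforce
  qed
  moreover have "finite_lattice S le"
    unfolding S_def using finite_lattice_Diff_meet_irreducibles[OF fl, of "{b}"] mi by blast
  moreover have "1 < card S" using card_L card_S by linarith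
  ultimately have "counterexample S le" unfolding counterexample_def by blast
  then have "card L \<le> card S" by (rule min_counterexample_card_le[OF min])
  then show False using card_S counterexample_card[OF ce] by linarith
qed

lemma min_counterexample_join_irreducible_le_meet_irreducible:
  assumes min: "min_counterexample L le" and mi: "meet_irreducible L le m"
  obtains j where "join_irreducible L le j" "le j m"
proof -
  have fl: "finite_lattice L le"
    using min unfolding min_counterexample_def counterexample_def by blast
  have m: "m \<in> L" using mi unfolding meet_irreducible_def by blast
  then obtain b where b: "b \<in> L" "\<And>x. x \<in> L \<Longrightarrow> le b x"
    using finite_lattice_bottom[OF fl] by blast
  have "m \<noteq> b" using min_counterexample_bottom_not_meet_irreducible[OF min b] mi by blast
  then show thesis using exists_join_irreducible_le[OF fl b m] that by blast
qed

lemma join_irreducible_removed_cover: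
  assumes fl: "finite_lattice L le" and mi: "meet_irreducible L le m" and m': "m' \<in> L"
    and inc: "\<not> le m m'" "\<not> le m' m"
    and c: "covers L le c m" and ji: "join_irreducible (L - {m, m'}) le c"
  shows "join_irreducible L le m"
    and "card (up_set L le m) = Suc (card (up_set (L - {m, m'}) le c))"
proof -
  note po = finite_lattice_partial_order[OF fl] and fin = finite_lattice_finite[OF fl]
  have m: "m \<in> L" using mi unfolding meet_irreducible_def by blast
  have cL: "c \<in> L" "le m c" "m \<noteq> c" using c unfolding covers_def by blast+
  have "c \<noteq> m'" using cL inc by blast
  obtain b where b: "b \<in> L" "\<And>x. x \<in> L \<Longrightarrow> le b x" using finite_lattice_bottom[OF fl] m by blast
  have "b \<noteq> m" using b m' inc by blast
  then obtain y0 where y0: "covers L le m y0"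
    using exists_lower_cover_above[OF po fin m b(1) b(2)[OF m]] by blast
  have "y \<in> L - {m, m'}" if y: "covers L le m y" for y
    using y inc unfolding covers_def by blast
  with y0 cL \<open>c \<noteq> m'\<close> show ji_m: "join_irreducible L le m"
    using join_irreducible_of_join_irreducible_cover[OF fl _ _ _ c _ ji] m by blast
  have "up_set (L - {m, m'}) le c = up_set L le c"
    using cL m m' inc partial_order_antisym[OF po] partial_order_trans[OF po m cL(1) m']
    unfolding up_set_def by blast
  then show "card (up_set L le m) = Suc (card (up_set (L - {m, m'}) le c))"
    using card_up_set_meet_irreducible[OF po fin mi c] by simp
qed

lemma card_le_Suc_card_Diff_pair:
  assumes "finite A" and "\<not> (a \<in> A \<and> b \<in> A)"
  shows "card A \<le> Suc (card (A - {a, b}))"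
proof -
  have eq: "A - {a, b} = A - {if a \<in> A then a else b}" using assms(2) by auto
  show ?thesis
    unfolding eq using assms(1) by (auto simp: card_Diff_singleton_if)
qed
lemma exists_join_irreducible_card_up_set_Diff:
  assumes fl: "finite_lattice L le"
    and mi1: "meet_irreducible L le m1" and mi2: "meet_irreducible L le m2"
    and inc: "\<not> le m1 m2" "\<not> le m2 m1"
    and no_common: "\<And>j. join_irreducible L le j \<Longrightarrow> le j m1 \<Longrightarrow> le j m2 \<Longrightarrow> False"
    and ji: "join_irreducible (L - {m1, m2}) le x"
  obtains x' where "join_irreducible L le x'"
    "card (up_set L le x') \<le> Suc (card (up_set (L - {m1, m2}) le x))"
proof -
  note po = finite_lattice_partial_order[OF fl] and fin = finite_lattice_finite[OF fl]
  have m1: "m1 \<in> L" and m2: "m2 \<in> L" using mi1 mi2 unfolding meet_irreducible_def by blast+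
  consider "covers L le x m1" | "covers L le x m2" | "\<not> covers L le x m1" "\<not> covers L le x m2"
    by blast
  then show thesis
  proof cases
    case 1
    then show thesis using join_irreducible_removed_cover[OF fl mi1 m2 inc 1 ji] that by simp
  next
    case 2
    have "L - {m2, m1} = L - {m1, m2}" by blast
    then show thesis
      using join_irreducible_removed_cover[OF fl mi2 m1 inc(2,1) 2] ji that by simp
  next
    case 3
    have R_covers: "c \<notin> {m1, m2}" if "m \<in> {m1, m2}" "covers L le c m" for m c
      using that inc unfolding covers_def by blast
    have x: "x \<in> L - {m1, m2}" using ji unfolding join_irreducible_def by blast
    have ji_x: "join_irreducible L le x"
      by (rule join_irreducible_Diff_meet_irreducibles[OF po fin _ R_covers x _ ji])
        (use mi1 mi2 3 in auto)
    have up: "up_set (L - {m1, m2}) le x = up_set L le x - {m1, m2}"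
      unfolding up_set_def by blast
    have not_both: "\<not> (m1 \<in> up_set L le x \<and> m2 \<in> up_set L le x)"
      using no_common[OF ji_x] unfolding up_set_def by blast
    have "finite (up_set L le x)" using fin unfolding up_set_def by simp
    then have "card (up_set L le x) \<le> Suc (card (up_set (L - {m1, m2}) le x))"
      unfolding up using not_both by (rule card_le_Suc_card_Diff_pair)
    with ji_x show thesis by (rule that)
  qed
qed

lemma min_counterexample_incomparable_meet_irreducibles:
  assumes min: "min_counterexample L le"
    and mi1: "meet_irreducible L le m1" and mi2: "meet_irreducible L le m2"
    and inc: "\<not> le m1 m2" "\<not> le m2 m1"
  shows "\<exists>j. join_irreducible L le j \<and> le j m1 \<and> le j m2"
proof (rule ccontr)
  assume "\<not> ?thesis"
  then have no_common: "\<And>j. join_irreducible L le j \<Longrightarrow> le j m1 \<Longrightarrow> le j m2 \<Longrightarrow> False"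
    by blast
  have ce: "counterexample L le" using min unfolding min_counterexample_def by blast
  note fl = counterexample_finite_lattice[OF ce]
  note po = finite_lattice_partial_order[OF fl] and fin = finite_lattice_finite[OF fl]
  have m1: "m1 \<in> L" and m2: "m2 \<in> L" using mi1 mi2 unfolding meet_irreducible_def by blast+
  define S where "S = L - {m1, m2}"
  have "m1 \<noteq> m2" using inc partial_order_refl[OF po m1] by blast
  moreover have "card {m1, m2} \<le> card L" using m1 m2 fin by (intro card_mono) auto
  ultimately have card_L: "card L = card S + 2"
    using m1 m2 fin unfolding S_def by (simp add: card_Diff_subset)
  obtain b where b: "b \<in> L" "\<And>x. x \<in> L \<Longrightarrow> le b x" using finite_lattice_bottom[OF fl] m1 by blast
  obtain t where t: "t \<in> L" "\<And>x. x \<in> L \<Longrightarrow> le x t" using finite_lattice_top[OF fl] m1 by blast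
  have "{b, t} \<subseteq> S"
    using b(1) t(1) b(2)[OF m1] b(2)[OF m2] t(2)[OF m1] t(2)[OF m2] inc unfolding S_def by auto
  moreover have "b \<noteq> t"
  proof
    assume "b = t"
    then have "le m1 m2" using b(2)[OF m2] t(2)[OF m1] partial_order_trans[OF po m1 t(1) m2] by simp
    with inc show False by blast
  qed
  moreover have "finite S" using fin unfolding S_def by simp
  ultimately have "1 < card S" using card_mono[of S "{b, t}"] by simp
  moreover have "finite_lattice S le"
    unfolding S_def using finite_lattice_Diff_meet_irreducibles[OF fl, of "{m1, m2}"] mi1 mi2
    by blast
  moreover have "card S < 2 * card (up_set S le x)" if ji: "join_irreducible S le x" for x
  proof -
    obtain x' where "join_irreducible L le x'" "card (up_set L le x') \<le> Suc (card (up_set S le x))"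
      using exists_join_irreducible_card_up_set_Diff[OF fl mi1 mi2 inc no_common ji[unfolded S_def]]
      unfolding S_def .
    with counterexample_up_set[OF ce] card_L show ?thesis by fastforce
  qed
  ultimately have "counterexample S le" unfolding counterexample_def by blast
  then show False using min_counterexample_card_le[OF min] card_L by fastforce
qed

theorem corollary2p11:
  fixes L :: "'a set" and le :: "'a \<Rightarrow> 'a \<Rightarrow> bool"
  assumes "min_counterexample L le"
    and "meet_irreducible L le m1" and "meet_irreducible L le m2"
  shows "\<exists>j. join_irreducible L le j \<and> le j m1 \<and> le j m2"
proof -
  have po: "is_partial_order L le"
    using assms(1) counterexample_finite_lattice finite_lattice_partial_order
    unfolding min_counterexample_def by blast
  have m1: "m1 \<in> L" and m2: "m2 \<in> L" using assms(2,3) unfolding meet_irreducible_def by blast+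
  consider "le m1 m2" | "le m2 m1" | "\<not> le m1 m2" "\<not> le m2 m1" by blast
  then show ?thesis
  proof cases
    case 1
    obtain j where j: "join_irreducible L le j" "le j m1"
      using min_counterexample_join_irreducible_le_meet_irreducible[OF assms(1,2)] .
    then have "j \<in> L" unfolding join_irreducible_def by blast
    then show ?thesis using j 1 partial_order_trans[OF po _ m1 m2] by blast
  next
    case 2
    obtain j where j: "join_irreducible L le j" "le j m2"
      using min_counterexample_join_irreducible_le_meet_irreducible[OF assms(1,3)] .
    then have "j \<in> L" unfolding join_irreducible_def by blast
    then show ?thesis using j 2 partial_order_trans[OF po _ m2 m1] by blast
  next
    case 3
    then show ?thesis using min_counterexample_incomparable_meet_irreducibles[OF assms] by blast
  qed
qed

end
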